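(* Assume that $1<c<2$ and let $m\ge 2$ be an integer. Let $L_k$ denote the subword complexity of the sequence $(\lfloor n^c\rfloor \bmod m)_{n\ge 0}$. There exists a constant $C_1$ such that $L_k\le C_1 k^r$ for all $k\ge 1$, for all $r>\max\{4/(2-c),6\}$. Moreover, there is a constant $C_2>0$ such that $L_k\ge C_2 k^3$ for all $k\ge1$.
   Context: For a sequence $u$ with values in $\{0,1,\ldots,m-1\}$ and a positive integer $k$, the subword complexity $L_k$ is the number of distinct blocks $B\in\{0,\ldots,m-1\}^k$ that occur as a contiguous subsequence $(u_n,u_{n+1},\ldots,u_{n+k-1})$ of $u$. *)

theory Defs
  imports Complex_Main
begin

definition subword_complexity :: "(nat \<Rightarrow> nat) \<Rightarrow> nat \<Rightarrow> nat" where
  "subword_complexity u k = card {map (\<lambda>i. u (n + i)) [0..<k] | n. True}"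

end

(*
  Write D i = floor ((n + i) powr c).  Once n exceeds (2 k^3) powr (1 / (2 - c)), the slope
  c x^(c - 1) of x powr c varies by at most 1 / k^2 on [n, n + k], so all chords of D have nearly
  the same slope; together with the convexity of D this forces (D i - D 0)_{i<k} to be a digitised
  line of slope a / b with b < k.  Modulo m such a block is one of m^2 k^3 (k + 1)^2 patterns, and
  the blocks starting below the threshold add at most (2 k^3) powr (1 / (2 - c)) + 1 more.

  Conversely, the slope c x^(c - 1) reaches every level m J + p / q + delta at points where the
  curvature of x powr c is as small as we please.  Stepping from there by q, the fractional part
  of n powr c sweeps [0, 1) slowly, so some n has floor ((n + i) powr c) = floor (n powr c) +
  (p i + r) div q modulo m for all i < k.  For k > 2 K distinct triples p < q <= K, r < q with p, q
  coprime give distinct blocks, and there are at least K^3 / 12 - K / 3 of them.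
*)
theory Submission
  imports Defs "HOL-Number_Theory.Cong"
begin

definition block :: "(nat \<Rightarrow> 'a) \<Rightarrow> nat \<Rightarrow> nat \<Rightarrow> 'a list" where
  "block u k n = map (\<lambda>i. u (n + i)) [0..<k]"

lemma subword_complexity_eq_card_range: "subword_complexity u k = card (range (block u k))"
  unfolding subword_complexity_def block_def by (simp add: full_SetCompr_eq)

lemma range_block_subset:
  fixes u :: "nat \<Rightarrow> nat"
  assumes "\<And>n. u n < m"
  shows "range (block u k) \<subseteq> {xs. set xs \<subseteq> {..<m} \<and> length xs = k}"
  using assms by (auto simp: block_def)

lemma finite_range_block:
  fixes u :: "nat \<Rightarrow> nat"
  assumes "\<And>n. u n < m"
  shows "finite (range (block u k))"
  by (rule finite_subset[OF range_block_subset[OF assms]], rule finite_lists_length_eq) simp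

lemma subword_complexity_le_power:
  assumes "\<And>n. u n < m"
  shows "subword_complexity u k \<le> m ^ k"
proof -
  have "card (range (block u k)) \<le> card {xs. set xs \<subseteq> {..<m} \<and> length xs = k}"
    using range_block_subset[OF assms] by (intro card_mono finite_lists_length_eq) auto
  then show ?thesis by (simp add: subword_complexity_eq_card_range card_lists_length_eq)
qed

lemma subword_complexity_pos:
  assumes "\<And>n. u n < m"
  shows "0 < subword_complexity u k"
  using finite_range_block[OF assms] by (simp add: subword_complexity_eq_card_range card_gt_0_iff)

lemma card_le_subword_complexity:
  assumes "\<And>n. u n < m" and "inj_on (\<lambda>t. block u k (f t)) A"
  shows "card A \<le> subword_complexity u k"
proof -
  have "card A = card ((\<lambda>t. block u k (f t)) ` A)"
    using assms(2) by (simp add: card_image)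
  also have "\<dots> \<le> card (range (block u k))"
    using finite_range_block[OF assms(1)] by (intro card_mono) auto
  finally show ?thesis by (simp add: subword_complexity_eq_card_range)
qed

lemma subword_complexity_le_add_card:
  assumes "\<And>n. N \<le> n \<Longrightarrow> block u k n \<in> P" and "finite P"
  shows "subword_complexity u k \<le> N + card P"
proof -
  have "range (block u k) \<subseteq> block u k ` {..<N} \<union> P"
  proof
    fix xs assume "xs \<in> range (block u k)"
    then obtain n where "xs = block u k n" by blast
    then show "xs \<in> block u k ` {..<N} \<union> P"
      using assms(1)[of n] by (cases "n < N") auto
  qed
  then have "card (range (block u k)) \<le> card (block u k ` {..<N} \<union> P)"
    using assms(2) by (intro card_mono) auto
  also have "\<dots> \<le> card (block u k ` {..<N}) + card P" by (rule card_Un_le)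
  also have "\<dots> \<le> N + card P" using card_image_le[of "{..<N}" "block u k"] by simp
  finally show ?thesis by (simp add: subword_complexity_eq_card_range)
qed

section \<open>Slope and curvature of \<open>x powr c\<close>\<close>

definition dpowr :: "real \<Rightarrow> real \<Rightarrow> real" where
  "dpowr c x = c * x powr (c - 1)"

lemma powr_chord_bounds:
  assumes "1 < c" "0 < a" "a < b"
  shows "dpowr c a * (b - a) < b powr c - a powr c" "b powr c - a powr c < dpowr c b * (b - a)"
proof -
  have "\<And>x. a \<le> x \<Longrightarrow> x \<le> b \<Longrightarrow> ((\<lambda>x. x powr c) has_real_derivative dpowr c x) (at x)"
    using assms by (auto simp: dpowr_def intro!: has_real_derivative_powr)
  from MVT2[OF assms(3) this] obtain z
    where z: "a < z" "z < b" "b powr c - a powr c = (b - a) * dpowr c z" by auto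
  have "dpowr c a < dpowr c z" "dpowr c z < dpowr c b"
    using z assms by (auto simp: dpowr_def intro!: powr_less_mono2)
  then show "dpowr c a * (b - a) < b powr c - a powr c" "b powr c - a powr c < dpowr c b * (b - a)"
    using z assms by (simp_all add: mult.commute)
qed

lemma dpowr_mono:
  assumes "1 < c" "0 < a" "a \<le> b"
  shows "dpowr c a \<le> dpowr c b"
  using assms by (auto simp: dpowr_def intro!: powr_mono2)

lemma dpowr_strict_mono:
  assumes "1 < c" "0 < a" "a < b"
  shows "dpowr c a < dpowr c b"
  using assms by (auto simp: dpowr_def intro!: powr_less_mono2)

lemma dpowr_increment_le:
  assumes "1 < c" "c < 2" "0 < a" "0 \<le> h"
  shows "dpowr c (a + h) - dpowr c a \<le> c * (c - 1) * a powr (c - 2) * h"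
proof (cases "h = 0")
  case False
  then have ab: "a < a + h" using assms by simp
  have "\<And>x. a \<le> x \<Longrightarrow> x \<le> a + h \<Longrightarrow>
      (dpowr c has_real_derivative c * ((c - 1) * x powr (c - 1 - 1))) (at x)"
    using assms unfolding dpowr_def by (auto intro!: derivative_eq_intros has_real_derivative_powr)
  from MVT2[OF ab this] obtain z where z: "a < z" "z < a + h"
    "dpowr c (a + h) - dpowr c a = (a + h - a) * (c * ((c - 1) * z powr (c - 1 - 1)))"
    by auto
  have "z powr (c - 2) \<le> a powr (c - 2)"
    using z assms by (intro powr_mono2') auto
  then have "h * (c * ((c - 1) * z powr (c - 2))) \<le> h * (c * ((c - 1) * a powr (c - 2)))"
    using assms by (intro mult_left_mono) auto
  then show ?thesis using z(3) by (simp add: algebra_simps)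
qed simp

lemma powr_linear_approx:
  assumes "1 < c" "c < 2" "0 < x" "0 \<le> h"
  shows "0 \<le> (x + h) powr c - x powr c - dpowr c x * h"
    and "(x + h) powr c - x powr c - dpowr c x * h \<le> c * (c - 1) * x powr (c - 2) * h ^ 2"
proof -
  have "dpowr c x * h \<le> (x + h) powr c - x powr c \<and>
        (x + h) powr c - x powr c \<le> dpowr c (x + h) * h"
    using powr_chord_bounds[OF assms(1,3), of "x + h"] assms by (cases "h = 0") auto
  moreover have "(dpowr c (x + h) - dpowr c x) * h \<le> c * (c - 1) * x powr (c - 2) * h * h"
    using dpowr_increment_le[OF assms] assms(4) by (rule mult_right_mono)
  ultimately show "0 \<le> (x + h) powr c - x powr c - dpowr c x * h"
    and "(x + h) powr c - x powr c - dpowr c x * h \<le> c * (c - 1) * x powr (c - 2) * h ^ 2"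
    by (simp_all add: left_diff_distrib power2_eq_square)
qed

lemma powr_curvature_eventually_le:
  fixes c e :: real
  assumes c: "1 < c" "c < 2" and e: "0 < e"
  obtains X where "0 < X" "\<And>x. X \<le> x \<Longrightarrow> c * (c - 1) * x powr (c - 2) \<le> e"
proof
  define X where "X = (e / 2) powr (1 / (c - 2))"
  show "0 < X" using e by (simp add: X_def)
  fix x assume x: "X \<le> x"
  have "x powr (c - 2) \<le> X powr (c - 2)"
    using x c \<open>0 < X\<close> by (intro powr_mono2') auto
  also have "\<dots> = e / 2" using c e by (simp add: X_def powr_powr)
  finally have "x powr (c - 2) \<le> e / 2" .
  moreover have "c * (c - 1) \<le> 2" using c by (simp add: mult_mono[of c 2 "c - 1" 1, simplified])
  ultimately have "c * (c - 1) * x powr (c - 2) \<le> 2 * (e / 2)"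
    by (intro mult_mono) auto
  then show "c * (c - 1) * x powr (c - 2) \<le> e" by simp
qed

lemma exists_dpowr_level:
  assumes c: "1 < c" "c < 2" and m: "0 < m" and \<beta>: "0 < \<beta>" and e: "0 < e"
  obtains x J where "0 < x" "dpowr c x = real (m * J) + \<beta>" "c * (c - 1) * x powr (c - 2) \<le> e"
proof -
  obtain X where X: "0 < X" "\<And>x. X \<le> x \<Longrightarrow> c * (c - 1) * x powr (c - 2) \<le> e"
    using powr_curvature_eventually_le[OF c e] by blast
  define J where "J = nat \<lceil>dpowr c X / real m\<rceil>"
  define x where "x = ((real (m * J) + \<beta>) / c) powr (1 / (c - 1))"
  have "dpowr c X / real m \<le> real J" unfolding J_def by linarith
  then have "dpowr c X < real (m * J) + \<beta>" using m \<beta> by (simp add: field_simps)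
  moreover have T: "0 < real (m * J) + \<beta>" using \<beta> by (simp add: add_nonneg_pos)
  then have level: "dpowr c x = real (m * J) + \<beta>"
    using c by (simp add: x_def dpowr_def powr_powr)
  moreover have "0 < x" using T c by (simp add: x_def)
  ultimately have "X \<le> x" using dpowr_strict_mono[OF c(1) \<open>0 < x\<close>, of X] by fastforce
  then show thesis using that[OF \<open>0 < x\<close> level X(2)] by blast
qed

lemma dpowr_window:
  assumes c: "1 < c" "c < 2" and x: "0 < x" and z: "x \<le> z" "z \<le> x + h"
  shows "dpowr c x \<le> dpowr c z"
    and "dpowr c z \<le> dpowr c x + c * (c - 1) * x powr (c - 2) * h"
    and "c * (c - 1) * z powr (c - 2) \<le> c * (c - 1) * x powr (c - 2)"
proof -
  show "dpowr c x \<le> dpowr c z" using dpowr_mono[OF c(1) x z(1)] .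
  have "dpowr c (x + (z - x)) - dpowr c x \<le> c * (c - 1) * x powr (c - 2) * (z - x)"
    using z by (intro dpowr_increment_le[OF c x]) auto
  also have "\<dots> \<le> c * (c - 1) * x powr (c - 2) * h"
    using c z by (intro mult_left_mono) auto
  finally show "dpowr c z \<le> dpowr c x + c * (c - 1) * x powr (c - 2) * h" by simp
  show "c * (c - 1) * z powr (c - 2) \<le> c * (c - 1) * x powr (c - 2)"
    using c x z by (intro mult_left_mono powr_mono2') auto
qed

section \<open>Digitised lines\<close>

lemma floor_chords_balanced:
  fixes y :: "nat \<Rightarrow> real"
  assumes slopes: "\<And>p q. p < q \<Longrightarrow> q < k \<Longrightarrow>
      \<alpha> * (real q - real p) \<le> y q - y p \<and> y q - y p \<le> \<beta> * (real q - real p)"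
    and spread: "(\<beta> - \<alpha>) * real k ^ 2 \<le> 1"
    and pq: "p < q" "q < k" and pq': "p' < q'" "q' < k"
  shows "(\<lfloor>y q'\<rfloor> - \<lfloor>y p'\<rfloor> - 1) * int (q - p) \<le> (\<lfloor>y q\<rfloor> - \<lfloor>y p\<rfloor> + 1) * int (q' - p')"
proof -
  define d d' where "d = real q - real p" and "d' = real q' - real p'"
  have pos: "0 < d" "0 < d'" and le_k: "d \<le> real k" "d' \<le> real k"
    using pq pq' by (auto simp: d_def d'_def)
  have "real_of_int (\<lfloor>y q'\<rfloor> - \<lfloor>y p'\<rfloor> - 1) < \<beta> * d'"
    using slopes[OF pq'] unfolding d'_def by linarith
  then have A: "real_of_int (\<lfloor>y q'\<rfloor> - \<lfloor>y p'\<rfloor> - 1) * d < \<beta> * d' * d"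
    using pos by (intro mult_strict_right_mono)
  have "\<alpha> * d < real_of_int (\<lfloor>y q\<rfloor> - \<lfloor>y p\<rfloor> + 1)"
    using slopes[OF pq] unfolding d_def by linarith
  then have B: "\<alpha> * d * d' < real_of_int (\<lfloor>y q\<rfloor> - \<lfloor>y p\<rfloor> + 1) * d'"
    using pos by (intro mult_strict_right_mono)
  have "\<alpha> * d \<le> \<beta> * d" using slopes[OF pq] unfolding d_def by linarith
  then have "\<alpha> \<le> \<beta>" using pos by simp
  moreover have "d * d' \<le> real k ^ 2"
    using pos le_k by (simp add: power2_eq_square mult_mono)
  ultimately have "(\<beta> - \<alpha>) * (d * d') \<le> 1"
    using spread by (smt (verit) mult_left_mono)
  then have "real_of_int ((\<lfloor>y q'\<rfloor> - \<lfloor>y p'\<rfloor> - 1) * int (q - p) - (\<lfloor>y q\<rfloor> - \<lfloor>y p\<rfloor> + 1) * int (q' - p')) < 1"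
    using A B pq pq' by (simp add: d_def d'_def of_nat_diff algebra_simps)
  then show ?thesis by linarith
qed

lemma floor_chords_convex:
  fixes y :: "nat \<Rightarrow> real"
  assumes i: "i1 < i2" "i2 < i3"
    and convex: "(y i2 - y i1) * (real i3 - real i2) \<le> (y i3 - y i2) * (real i2 - real i1)"
  shows "(\<lfloor>y i2\<rfloor> - \<lfloor>y i1\<rfloor> - 1) * int (i3 - i2) < (\<lfloor>y i3\<rfloor> - \<lfloor>y i2\<rfloor> + 1) * int (i2 - i1)"
proof -
  have pos: "0 < real i3 - real i2" "0 < real i2 - real i1" using i by auto
  have "real_of_int (\<lfloor>y i2\<rfloor> - \<lfloor>y i1\<rfloor> - 1) * (real i3 - real i2) < (y i2 - y i1) * (real i3 - real i2)"
    using pos by (intro mult_strict_right_mono) linarith+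
  also note convex
  also have "(y i3 - y i2) * (real i2 - real i1) < real_of_int (\<lfloor>y i3\<rfloor> - \<lfloor>y i2\<rfloor> + 1) * (real i2 - real i1)"
    using pos by (intro mult_strict_right_mono) linarith+
  finally have "real_of_int ((\<lfloor>y i2\<rfloor> - \<lfloor>y i1\<rfloor> - 1) * int (i3 - i2))
      < real_of_int ((\<lfloor>y i3\<rfloor> - \<lfloor>y i2\<rfloor> + 1) * int (i2 - i1))"
    using i by (simp add: of_nat_diff)
  then show ?thesis by (simp only: of_int_less_iff)
qed

(* The ceiling of (a i - J) / b, except that where (a i - J) / b is an integer and i lies
   outside [s, t) the value is one larger. *)
definition quasi_linear :: "int \<Rightarrow> nat \<Rightarrow> int \<Rightarrow> nat \<Rightarrow> nat \<Rightarrow> nat \<Rightarrow> int" where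
  "quasi_linear a b J s t i = (a * int i - J) div int b +
     (if int b dvd (a * int i - J) \<and> s \<le> i \<and> i < t then 0 else 1)"

lemma quasi_linear_eqI:
  assumes b: "0 < b" and eq: "a * int i - J = int b * d - v" and v: "0 \<le> v" "v \<le> int b"
    and "v = 0 \<Longrightarrow> s \<le> i \<and> i < t" and "v = int b \<Longrightarrow> \<not> (s \<le> i \<and> i < t)"
  shows "quasi_linear a b J s t i = d"
proof -
  consider "v = 0" | "v = int b" | "0 < v \<and> v < int b" using v by linarith
  then show ?thesis
  proof cases
    case 1
    then show ?thesis using eq b assms(5) by (simp add: quasi_linear_def)
  next
    case 2
    then have "a * int i - J = int b * (d - 1)" using eq by (simp add: algebra_simps)
    then show ?thesis using 2 b assms(6) by (simp add: quasi_linear_def)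
  next
    case 3
    have eq': "a * int i - J = (int b - v) + int b * (d - 1)" using eq by (simp add: algebra_simps)
    have "\<not> int b dvd (a * int i - J)"
      unfolding eq' using 3 by (simp add: dvd_add_left_iff zdvd_not_zless)
    moreover have "(a * int i - J) div int b = d - 1"
      unfolding eq' using 3 by (simp add: div_pos_pos_trivial)
    ultimately show ?thesis by (simp add: quasi_linear_def)
  qed
qed

lemma quasi_linear_shift:
  assumes "0 < b"
  shows "quasi_linear (a + int b * e) b J s t i = quasi_linear a b J s t i + e * int i"
proof -
  have split: "(a + int b * e) * int i - J = (a * int i - J) + int b * (e * int i)"
    by (simp add: algebra_simps)
  have "((a * int i - J) + int b * (e * int i)) div int b = (a * int i - J) div int b + e * int i"
    using assms by simp
  moreover have "int b dvd (a * int i - J) + int b * (e * int i) \<longleftrightarrow> int b dvd (a * int i - J)"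
    by (simp add: dvd_add_left_iff)
  ultimately show ?thesis unfolding quasi_linear_def split by simp
qed

lemma balanced_line_exists:
  fixes D :: "nat \<Rightarrow> int"
  assumes "2 \<le> k"
    and balanced: "\<And>p q p' q'. p < q \<Longrightarrow> q < k \<Longrightarrow> p' < q' \<Longrightarrow> q' < k \<Longrightarrow>
        (D q' - D p' - 1) * int (q - p) \<le> (D q - D p + 1) * int (q' - p')"
  obtains b a where "1 \<le> b" "b < k"
    "\<And>i j. i < k \<Longrightarrow> j < k \<Longrightarrow> \<bar>(int b * D i - a * int i) - (int b * D j - a * int j)\<bar> \<le> int b"
proof -
  \<comment> \<open>\<open>a / b\<close> is the least upper chord slope \<open>(D q - D p + 1) / (q - p)\<close>; by the
    balancing hypothesis it dominates every lower chord slope \<open>(D q - D p - 1) / (q - p)\<close>.\<close>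
  define S where "S = {(p, q). p < q \<and> q < k}"
  define \<rho> where "\<rho> = (\<lambda>(p, q). real_of_int (D q - D p + 1) / real (q - p))"
  have "S \<subseteq> {..<k} \<times> {..<k}" unfolding S_def by auto
  then have "finite (\<rho> ` S)" by (intro finite_imageI) (rule finite_subset, auto)
  moreover have "(0, 1) \<in> S" using assms(1) unfolding S_def by auto
  ultimately have "Min (\<rho> ` S) \<in> \<rho> ` S" by (intro Min_in) auto
  then obtain p0 q0 where "(p0, q0) \<in> S" "\<rho> (p0, q0) = Min (\<rho> ` S)" by auto
  then have pq0: "p0 < q0" "q0 < k" and min: "\<And>x. x \<in> S \<Longrightarrow> \<rho> (p0, q0) \<le> \<rho> x"
    using \<open>finite (\<rho> ` S)\<close> by (auto simp: S_def)
  define a where "a = D q0 - D p0 + 1"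
  define b where "b = q0 - p0"
  have b: "1 \<le> b" "b < k" using pq0 unfolding b_def by auto
  have line: "int b * (D q - D p) - a * int (q - p) \<in> {- int b..int b}" if "p < q" "q < k" for p q
  proof -
    have "real_of_int a / real b \<le> real_of_int (D q - D p + 1) / real (q - p)"
      using min[of "(p, q)"] that unfolding \<rho>_def a_def b_def S_def by simp
    then have "real_of_int (a * int (q - p)) \<le> real_of_int (int b * (D q - D p + 1))"
      using b that by (simp add: divide_simps mult.commute)
    then have "a * int (q - p) \<le> int b * (D q - D p + 1)" by (simp only: of_int_le_iff)
    moreover have "int b * (D q - D p - 1) \<le> a * int (q - p)"
      using balanced[OF pq0 that] unfolding a_def b_def by (simp add: mult.commute)
    ultimately show ?thesis by (simp add: right_diff_distrib distrib_left)
  qed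
  define E where "E i = int b * D i - a * int i" for i
  have E_ordered: "\<bar>E j - E i\<bar> \<le> int b" if "i < j" "j < k" for i j
    using line[OF that] that by (simp add: E_def of_nat_diff algebra_simps abs_le_iff)
  have "\<bar>E i - E j\<bar> \<le> int b" if "i < k" "j < k" for i j
    using E_ordered[of i j] E_ordered[of j i] that
    by (cases i j rule: linorder_cases) (simp_all add: abs_minus_commute)
  then show thesis using that[OF b] unfolding E_def by blast
qed

lemma convex_no_peak:
  fixes D :: "nat \<Rightarrow> int"
  assumes b: "0 < b" and convex: "(D i - D p - 1) * int (q - i) < (D q - D i + 1) * int (i - p)"
    and pq: "p < i" "i < q"
    and rise: "(int b * D i - a * int i) - (int b * D p - a * int p) = int b"
  shows "(int b * D q - a * int q) - (int b * D i - a * int i) \<noteq> - int b"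
proof
  assume fall: "(int b * D q - a * int q) - (int b * D i - a * int i) = - int b"
  have left: "int b * (D i - D p - 1) = a * int (i - p)"
    and right: "int b * (D q - D i + 1) = a * int (q - i)"
    using pq rise fall by (simp_all add: of_nat_diff algebra_simps)
  have "int b * ((D i - D p - 1) * int (q - i)) = a * int (i - p) * int (q - i)"
    using left by (simp add: mult.assoc[symmetric])
  also have "\<dots> = int b * ((D q - D i + 1) * int (i - p))"
    using right by (simp add: mult.assoc[symmetric] mult.commute[of _ "int (i - p)"])
  finally show False using convex b by simp
qed

lemma quasi_linear_if_oscillation_le:
  fixes D :: "nat \<Rightarrow> int"
  assumes k: "0 < k" and b: "0 < b"
    and osc: "\<And>i j. i < k \<Longrightarrow> j < k \<Longrightarrow> \<bar>(int b * D i - a * int i) - (int b * D j - a * int j)\<bar> \<le> int b"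
    and convex: "\<And>i1 i2 i3. i1 < i2 \<Longrightarrow> i2 < i3 \<Longrightarrow> i3 < k \<Longrightarrow>
        (D i2 - D i1 - 1) * int (i3 - i2) < (D i3 - D i2 + 1) * int (i2 - i1)"
  obtains J s t where "0 \<le> J" "J \<le> int b" "s \<le> k" "t \<le> k"
    "\<And>i. i < k \<Longrightarrow> D i - D 0 = quasi_linear a b J s t i"
proof -
  \<comment> \<open>\<open>E\<close> takes values in \<open>[\<mu>, \<mu> + b]\<close>; \<open>[s, t)\<close> runs from the first to the last
    point where the minimum \<open>\<mu>\<close> is attained.\<close>
  define E where "E i = int b * D i - a * int i" for i
  define \<mu> where "\<mu> = Min (E ` {..<k})"
  define Z where "Z = {i. i < k \<and> E i = \<mu>}"
  have \<mu>_le: "\<mu> \<le> E i" if "i < k" for i unfolding \<mu>_def using that by auto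
  have "\<mu> \<in> E ` {..<k}" unfolding \<mu>_def using k by (intro Min_in) auto
  then have "Z \<noteq> {}" "finite Z" unfolding Z_def by auto
  define s where "s = Min Z"
  define t where "t = Max Z"
  have s: "s \<in> Z" "\<And>i. i \<in> Z \<Longrightarrow> s \<le> i" and t: "t \<in> Z" "\<And>i. i \<in> Z \<Longrightarrow> i \<le> t"
    using \<open>Z \<noteq> {}\<close> \<open>finite Z\<close> by (simp_all add: s_def t_def)
  define J where "J = E 0 - \<mu>"
  have "quasi_linear a b J s (Suc t) i = D i - D 0" if i: "i < k" for i
  proof (rule quasi_linear_eqI[OF b])
    show "a * int i - J = int b * (D i - D 0) - (E i - \<mu>)" by (simp add: J_def E_def algebra_simps)
    show "0 \<le> E i - \<mu>" using \<mu>_le[OF i] by simp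
    show "E i - \<mu> \<le> int b" using osc[OF i, of s] s(1) by (auto simp: Z_def E_def)
    show "s \<le> i \<and> i < Suc t" if "E i - \<mu> = 0"
    proof -
      have "i \<in> Z" using that i by (simp add: Z_def)
      then show ?thesis using s(2) t(2) by (simp add: less_Suc_eq_le)
    qed
    show "\<not> (s \<le> i \<and> i < Suc t)" if "E i - \<mu> = int b"
    proof
      assume "s \<le> i \<and> i < Suc t"
      moreover have "i \<noteq> s" "i \<noteq> t" using that b s(1) t(1) by (auto simp: Z_def)
      ultimately have "s < i" "i < t" "t < k" using s(1) t(1) by (auto simp: Z_def)
      moreover have "E i - E s = int b" "E t - E i = - int b" using that s(1) t(1) by (auto simp: Z_def)
      ultimately show False using convex_no_peak[OF b convex[of s i t], of a] by (simp add: E_def)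
    qed
  qed
  moreover have "0 \<le> J" "J \<le> int b"
    using \<mu>_le[OF k] osc[OF k, of s] s(1) by (auto simp: J_def Z_def E_def)
  moreover have "s \<le> k" "Suc t \<le> k" using s(1) t(1) by (auto simp: Z_def)
  ultimately show thesis using that[of J s "Suc t"] by simp
qed

lemma quasi_linear_if_balanced_convex:
  fixes D :: "nat \<Rightarrow> int"
  assumes "2 \<le> k"
    and "\<And>p q p' q'. p < q \<Longrightarrow> q < k \<Longrightarrow> p' < q' \<Longrightarrow> q' < k \<Longrightarrow>
        (D q' - D p' - 1) * int (q - p) \<le> (D q - D p + 1) * int (q' - p')"
    and "\<And>i1 i2 i3. i1 < i2 \<Longrightarrow> i2 < i3 \<Longrightarrow> i3 < k \<Longrightarrow>
        (D i2 - D i1 - 1) * int (i3 - i2) < (D i3 - D i2 + 1) * int (i2 - i1)"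
  obtains a b J s t where "\<And>i. i < k \<Longrightarrow> D i - D 0 = quasi_linear a b J s t i"
    "1 \<le> b" "b < k" "0 \<le> J" "J \<le> int b" "s \<le> k" "t \<le> k"
proof (rule balanced_line_exists[OF assms(1), where D = D])
  fix b a
  assume b: "1 \<le> b" "b < k" and
    osc: "\<And>i j. i < k \<Longrightarrow> j < k \<Longrightarrow> \<bar>(int b * D i - a * int i) - (int b * D j - a * int j)\<bar> \<le> int b"
  have "0 < k" "0 < b" using assms(1) b by auto
  then show thesis
  proof (rule quasi_linear_if_oscillation_le)
    fix J s t
    assume "0 \<le> J" "J \<le> int b" "s \<le> k" "t \<le> k"
      "\<And>i. i < k \<Longrightarrow> D i - D 0 = quasi_linear a b J s t i"
    with b show thesis by (intro that)
  qed (fact osc, fact assms(3))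
qed (rule assms(2))

definition pattern :: "nat \<Rightarrow> nat \<Rightarrow> nat \<times> nat \<times> nat \<times> nat \<times> nat \<times> nat \<Rightarrow> nat list" where
  "pattern m k = (\<lambda>(d, a, b, J, s, t).
     map (\<lambda>i. nat ((int d + quasi_linear (int a) b (int J) s t i) mod int m)) [0..<k])"

lemma map_mod_eq_pattern:
  fixes D :: "nat \<Rightarrow> int"
  assumes m: "0 < m" and b: "0 < b" and J: "0 \<le> J"
    and D: "\<And>i. i < k \<Longrightarrow> D i - D 0 = quasi_linear a b J s t i"
  shows "map (\<lambda>i. nat (D i mod int m)) [0..<k]
       = pattern m k (nat (D 0 mod int m), nat (a mod (int m * int b)), b, nat J, s, t)"
proof -
  define a' where "a' = a mod (int m * int b)"
  define e where "e = a div (int m * int b)"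
  have a'_nonneg: "0 \<le> a'" using m b by (simp add: a'_def)
  have a'_eq: "a = a' + int b * (int m * e)"
    using mod_mult_div_eq[of a "int m * int b"] unfolding a'_def e_def
    by (simp only: mult.assoc mult.left_commute)
  have step: "D i mod int m = (D 0 mod int m + quasi_linear a' b J s t i) mod int m" if "i < k" for i
  proof -
    have "D i = (D 0 + quasi_linear a' b J s t i) + int m * (e * int i)"
      using D[OF that] quasi_linear_shift[OF b, of a' "int m * e" J s t i] a'_eq by (simp add: mult.assoc)
    then have "D i mod int m = (D 0 + quasi_linear a' b J s t i) mod int m" by simp
    then show ?thesis by (simp add: mod_add_left_eq)
  qed
  have "nat (D i mod int m)
      = nat ((int (nat (D 0 mod int m)) + quasi_linear (int (nat a')) b (int (nat J)) s t i) mod int m)"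
    if "i < k" for i
    using step[OF that] m a'_nonneg J by simp
  then show ?thesis unfolding a'_def[symmetric] by (simp add: pattern_def map_eq_conv)
qed

section \<open>The upper bound\<close>

lemma floor_powr_quasi_linear:
  assumes c: "1 < c" and x: "0 < x" and k: "2 \<le> k"
    and flat: "(dpowr c (x + real k) - dpowr c x) * real k ^ 2 \<le> 1"
  obtains a b J s t where
    "\<And>i. i < k \<Longrightarrow> \<lfloor>(x + real i) powr c\<rfloor> - \<lfloor>x powr c\<rfloor> = quasi_linear a b J s t i"
    "1 \<le> b" "b < k" "0 \<le> J" "J \<le> int b" "s \<le> k" "t \<le> k"
proof -
  define y where "y i = (x + real i) powr c" for i
  have chord: "dpowr c (x + real p) * (real q - real p) < y q - y p"
    "y q - y p < dpowr c (x + real q) * (real q - real p)" if "p < q" for p q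
    using powr_chord_bounds[OF c, of "x + real p" "x + real q"] that x by (simp_all add: y_def)
  have balanced: "(\<lfloor>y q'\<rfloor> - \<lfloor>y p'\<rfloor> - 1) * int (q - p) \<le> (\<lfloor>y q\<rfloor> - \<lfloor>y p\<rfloor> + 1) * int (q' - p')"
    if "p < q" "q < k" "p' < q'" "q' < k" for p q p' q'
  proof (rule floor_chords_balanced[OF _ flat that])
    fix p q :: nat assume pq: "p < q" "q < k"
    have "dpowr c x \<le> dpowr c (x + real p)" "dpowr c (x + real q) \<le> dpowr c (x + real k)"
      using pq x by (auto intro: dpowr_mono[OF c])
    then show "dpowr c x * (real q - real p) \<le> y q - y p \<and> y q - y p \<le> dpowr c (x + real k) * (real q - real p)"
      using chord[OF pq(1)] pq(1) by (smt (verit) mult_right_mono of_nat_less_iff)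
  qed
  have convex: "(\<lfloor>y i2\<rfloor> - \<lfloor>y i1\<rfloor> - 1) * int (i3 - i2) < (\<lfloor>y i3\<rfloor> - \<lfloor>y i2\<rfloor> + 1) * int (i2 - i1)"
    if "i1 < i2" "i2 < i3" for i1 i2 i3
  proof (rule floor_chords_convex[OF that])
    have "(y i2 - y i1) * (real i3 - real i2) \<le> dpowr c (x + real i2) * (real i2 - real i1) * (real i3 - real i2)"
      using chord(2)[OF that(1)] that by (intro mult_right_mono) auto
    also have "\<dots> \<le> (y i3 - y i2) * (real i2 - real i1)"
      using chord(1)[OF that(2)] that by (simp add: mult.commute mult.left_commute)
    finally show "(y i2 - y i1) * (real i3 - real i2) \<le> (y i3 - y i2) * (real i2 - real i1)" .
  qed
  show thesis
  proof (rule quasi_linear_if_balanced_convex[OF k, where D = "\<lambda>i. \<lfloor>y i\<rfloor>"])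
    fix a b J s t
    assume "\<And>i. i < k \<Longrightarrow> \<lfloor>y i\<rfloor> - \<lfloor>y 0\<rfloor> = quasi_linear a b J s t i"
      "1 \<le> b" "b < k" "0 \<le> J" "J \<le> int b" "s \<le> k" "t \<le> k"
    then show thesis by (intro that[of a b J s t]) (simp_all add: y_def)
  qed (rule balanced convex; assumption)+
qed

lemma subword_complexity_floor_powr_le:
  assumes c: "1 < c" and m: "0 < m" and k: "2 \<le> k" and N: "0 < N"
    and flat: "\<And>n. N \<le> n \<Longrightarrow> (dpowr c (real n + real k) - dpowr c (real n)) * real k ^ 2 \<le> 1"
  shows "subword_complexity (\<lambda>n. nat \<lfloor>real n powr c\<rfloor> mod m) k \<le> N + m\<^sup>2 * k ^ 3 * (k + 1)\<^sup>2"
proof -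
  define B where "B = {..<m} \<times> {..<m * k} \<times> {..<k} \<times> {..<k} \<times> {..k} \<times> {..k}"
  have finB: "finite B" by (simp add: B_def)
  have "block (\<lambda>n. nat \<lfloor>real n powr c\<rfloor> mod m) k n \<in> pattern m k ` B" if n: "N \<le> n" for n
  proof -
    have n0: "0 < real n" using n N by simp
    show ?thesis
    proof (rule floor_powr_quasi_linear[OF c n0 k flat[OF n]])
      fix a b J s t
      assume ql: "\<And>i. i < k \<Longrightarrow> \<lfloor>(real n + real i) powr c\<rfloor> - \<lfloor>real n powr c\<rfloor> = quasi_linear a b J s t i"
        and b: "1 \<le> b" "b < k" and J: "0 \<le> J" "J \<le> int b" and st: "s \<le> k" "t \<le> k"
      define D where "D i = \<lfloor>(real n + real i) powr c\<rfloor>" for i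
      have "nat \<lfloor>real (n + i) powr c\<rfloor> mod m = nat (D i mod int m)" for i
        using nat_mod_distrib[of "D i" "int m"] by (simp add: D_def)
      then have "block (\<lambda>n. nat \<lfloor>real n powr c\<rfloor> mod m) k n = map (\<lambda>i. nat (D i mod int m)) [0..<k]"
        by (simp add: block_def)
      also have "\<dots> = pattern m k (nat (D 0 mod int m), nat (a mod (int m * int b)), b, nat J, s, t)"
        using m b J ql by (intro map_mod_eq_pattern) (simp_all add: D_def)
      also have "\<dots> \<in> pattern m k ` B"
      proof (intro imageI)
        have "a mod (int m * int b) < int m * int b" using m b by simp
        also have "\<dots> \<le> int m * int k" using b by (intro mult_left_mono) auto
        finally have "a mod (int m * int b) < int m * int k" .
        then show "(nat (D 0 mod int m), nat (a mod (int m * int b)), b, nat J, s, t) \<in> B"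
          using m b J st by (simp add: B_def nat_less_iff)
      qed
      finally show ?thesis .
    qed
  qed
  then have "subword_complexity (\<lambda>n. nat \<lfloor>real n powr c\<rfloor> mod m) k \<le> N + card (pattern m k ` B)"
    by (rule subword_complexity_le_add_card) (simp_all add: finB)
  also have "card (pattern m k ` B) \<le> card B" by (rule card_image_le[OF finB])
  also have "card B = m * (m * k) * k * k * Suc k * Suc k"
    by (simp only: B_def card_cartesian_product card_lessThan card_atMost)
  also have "\<dots> = m\<^sup>2 * k ^ 3 * (k + 1)\<^sup>2"
    by (simp add: power2_eq_square power3_eq_cube algebra_simps)
  finally show ?thesis by simp
qed

lemma dpowr_variation_le:
  assumes c: "1 < c" "c < 2" and k: "1 \<le> k" and x: "(2 * real k ^ 3) powr (1 / (2 - c)) \<le> x"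
  shows "(dpowr c (x + real k) - dpowr c x) * real k ^ 2 \<le> 1"
proof -
  have "0 < (2 * real k ^ 3) powr (1 / (2 - c))" using k by simp
  then have x0: "0 < x" using x by linarith
  have "((2 * real k ^ 3) powr (1 / (2 - c))) powr (2 - c) \<le> x powr (2 - c)"
    using x c by (intro powr_mono2) auto
  then have big: "2 * real k ^ 3 \<le> x powr (2 - c)" using c k by (simp add: powr_powr)
  have "(dpowr c (x + real k) - dpowr c x) * real k ^ 2 \<le> c * (c - 1) * x powr (c - 2) * real k * real k ^ 2"
    using dpowr_increment_le[OF c x0, of "real k"] by (intro mult_right_mono) auto
  also have "\<dots> = c * (c - 1) * (real k ^ 3 / x powr (2 - c))"
    using x0 by (simp add: powr_diff power3_eq_cube power2_eq_square field_simps)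
  also have "\<dots> \<le> 2 * (real k ^ 3 / x powr (2 - c))"
    using c x0 by (intro mult_right_mono) (simp_all add: mult_mono[of c 2 "c - 1" 1, simplified])
  also have "\<dots> \<le> 1" using big x0 by (simp add: divide_simps)
  finally show ?thesis .
qed

lemma subword_complexity_floor_powr_le_root:
  fixes c :: real
  assumes c: "1 < c" "c < 2" and m: "0 < m" and k: "2 \<le> k"
  shows "real (subword_complexity (\<lambda>n. nat \<lfloor>real n powr c\<rfloor> mod m) k)
    \<le> (2 * real k ^ 3) powr (1 / (2 - c)) + 1 + real m ^ 2 * (real k ^ 3 * (real k + 1) ^ 2)"
proof -
  define X where "X = (2 * real k ^ 3) powr (1 / (2 - c))"
  have X: "0 < X" "real (nat \<lceil>X\<rceil>) \<le> X + 1" using k by (simp_all add: X_def)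
  have "subword_complexity (\<lambda>n. nat \<lfloor>real n powr c\<rfloor> mod m) k \<le> nat \<lceil>X\<rceil> + m\<^sup>2 * k ^ 3 * (k + 1)\<^sup>2"
  proof (rule subword_complexity_floor_powr_le[OF c(1) m k])
    fix n assume "nat \<lceil>X\<rceil> \<le> n"
    then have "X \<le> real n" by linarith
    then show "(dpowr c (real n + real k) - dpowr c (real n)) * real k ^ 2 \<le> 1"
      using dpowr_variation_le[OF c, of k] k unfolding X_def by simp
  qed (use X in simp)
  then have "real (subword_complexity (\<lambda>n. nat \<lfloor>real n powr c\<rfloor> mod m) k)
      \<le> real (nat \<lceil>X\<rceil> + m\<^sup>2 * k ^ 3 * (k + 1)\<^sup>2)"
    by (simp only: of_nat_le_iff)
  also have "\<dots> = real (nat \<lceil>X\<rceil>) + real m ^ 2 * (real k ^ 3 * (real k + 1) ^ 2)"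
    by (simp add: mult.assoc)
  finally show ?thesis using X(2) unfolding X_def by linarith
qed

lemma root_powr_le:
  fixes c r :: real
  assumes "1 \<le> k" "c < 2" "3 / (2 - c) \<le> r"
  shows "(2 * real k ^ 3) powr (1 / (2 - c)) \<le> 2 powr (1 / (2 - c)) * real k powr r"
proof -
  have "real k ^ 3 = real k powr 3" using assms by (simp add: powr_realpow)
  then have "(real k ^ 3) powr (1 / (2 - c)) = real k powr (3 * (1 / (2 - c)))"
    by (simp only: powr_powr)
  then have "(2 * real k ^ 3) powr (1 / (2 - c)) = 2 powr (1 / (2 - c)) * real k powr (3 / (2 - c))"
    by (simp add: powr_mult)
  also have "\<dots> \<le> 2 powr (1 / (2 - c)) * real k powr r"
    using assms by (intro mult_left_mono powr_mono) auto
  finally show ?thesis .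
qed

lemma cube_succ_square_le_powr:
  assumes "1 \<le> k" "5 \<le> r"
  shows "real k ^ 3 * (real k + 1) ^ 2 \<le> 4 * real k powr r"
proof -
  have "real k ^ 3 * (real k + 1) ^ 2 \<le> real k ^ 3 * (2 * real k) ^ 2"
    using assms by (intro mult_left_mono power_mono) auto
  also have "\<dots> = 4 * real k powr 5"
  proof -
    have "real k powr 5 = real k ^ 5" using assms by (simp add: powr_realpow)
    then show ?thesis by (simp add: power2_eq_square power3_eq_cube eval_nat_numeral)
  qed
  also have "\<dots> \<le> 4 * real k powr r" using assms by (intro mult_left_mono powr_mono) auto
  finally show ?thesis .
qed

lemma subword_complexity_floor_powr_upper:
  fixes c r :: real
  assumes c: "1 < c" "c < 2" and m: "0 < m" and r: "3 / (2 - c) \<le> r" "5 \<le> r"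
  shows "\<exists>C. \<forall>k::nat. 1 \<le> k \<longrightarrow>
           real (subword_complexity (\<lambda>n. nat \<lfloor>real n powr c\<rfloor> mod m) k) \<le> C * real k powr r"
proof (intro exI allI impI)
  define C where "C = 2 powr (1 / (2 - c)) + 1 + 4 * real m ^ 2"
  fix k :: nat assume k: "1 \<le> k"
  let ?L = "real (subword_complexity (\<lambda>n. nat \<lfloor>real n powr c\<rfloor> mod m) k)"
  have k_powr: "1 \<le> real k powr r" using k r by (simp add: ge_one_powr_ge_zero)
  show "?L \<le> C * real k powr r"
  proof (cases "k = 1")
    case True
    have "subword_complexity (\<lambda>n. nat \<lfloor>real n powr c\<rfloor> mod m) k \<le> m ^ k"
      using m by (intro subword_complexity_le_power) simp
    then have "?L \<le> real m" using True by simp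
    also have "\<dots> \<le> real m ^ 2" using m by (simp add: power2_eq_square)
    also have "\<dots> \<le> C" unfolding C_def by simp
    finally show ?thesis using True by simp
  next
    case False
    then have "?L \<le> (2 * real k ^ 3) powr (1 / (2 - c)) + 1 + real m ^ 2 * (real k ^ 3 * (real k + 1) ^ 2)"
      using k by (intro subword_complexity_floor_powr_le_root[OF c m]) simp
    moreover have "real m ^ 2 * (real k ^ 3 * (real k + 1) ^ 2) \<le> real m ^ 2 * (4 * real k powr r)"
      using cube_succ_square_le_powr[OF k r(2)] by (intro mult_left_mono) simp_all
    moreover have "C * real k powr r
        = 2 powr (1 / (2 - c)) * real k powr r + real k powr r + real m ^ 2 * (4 * real k powr r)"
      by (simp add: C_def algebra_simps)
    ultimately show ?thesis using root_powr_le[OF k c(2) r(1)] k_powr by linarith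
  qed
qed

section \<open>Realising staircases\<close>

lemma floor_div_offset:
  fixes j q :: nat and E :: real
  assumes q: "0 < q" and E: "0 \<le> E" "E < 1 / (2 * real q)"
  shows "\<lfloor>(real j + 1 / 2) / real q + E\<rfloor> = int (j div q)"
proof (rule floor_unique)
  have "real j = real (q * (j div q) + j mod q)" by simp
  then have j: "real j = real q * real (j div q) + real (j mod q)" by (simp only: of_nat_add of_nat_mult)
  have "j mod q + 1 \<le> q" using q by (simp add: Suc_leI)
  then have frac: "(real (j mod q) + 1) / real q \<le> 1" using q by simp
  have eq: "(real j + 1 / 2) / real q + E = real (j div q) + ((real (j mod q) + 1 / 2) / real q + E)"
    using q by (simp add: j field_simps)
  have "(real (j mod q) + 1 / 2) / real q + E < (real (j mod q) + 1) / real q"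
    using E q by (simp add: field_simps)
  then show "(real j + 1 / 2) / real q + E < real_of_int (int (j div q)) + 1"
    using eq frac by simp
  show "real_of_int (int (j div q)) \<le> (real j + 1 / 2) / real q + E"
    using eq E q by simp
qed

lemma exists_phase:
  fixes g :: "nat \<Rightarrow> real"
  assumes step: "\<And>l. l < L \<Longrightarrow> \<delta> \<le> g (Suc l) - g l \<and> g (Suc l) - g l \<le> \<eta>"
    and long: "2 \<le> \<delta> * real L" and t: "0 \<le> t" "t < 1"
  obtains l Y where "l \<le> L" "0 \<le> g l - (real_of_int Y + t)" "g l - (real_of_int Y + t) < \<eta>"
proof -
  have grow: "g 0 + \<delta> * real l \<le> g l" if "l \<le> L" for l
    using that
  proof (induction l)
    case (Suc l)
    then show ?case using step[of l] by (simp add: algebra_simps)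
  qed simp
  define Y where "Y = \<lfloor>g 0\<rfloor> + 1"
  define l where "l = (LEAST l. real_of_int Y + t \<le> g l)"
  have "real_of_int Y + t \<le> g L" using grow[of L] long t unfolding Y_def by linarith
  then have l: "real_of_int Y + t \<le> g l" "l \<le> L"
    unfolding l_def by (auto intro: LeastI Least_le)
  have "g 0 < real_of_int Y + t" using t unfolding Y_def by linarith
  then obtain l' where l': "l = Suc l'" using l(1) by (cases l) auto
  then have "g l' < real_of_int Y + t" using not_less_Least[of l' "\<lambda>l. real_of_int Y + t \<le> g l"]
    unfolding l_def by (simp add: not_le)
  moreover have "g l - g l' \<le> \<eta>" using step[of l'] l' l(2) by simp
  ultimately show thesis using l by (intro that[of l Y]) auto
qed

lemma floor_powr_window:
  fixes Y A :: int and p q r k i :: nat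
  assumes c: "1 < c" "c < 2" and x: "0 < x" and q: "0 < q"
    and base: "x powr c = real_of_int Y + (real r + 1 / 2) / real q + \<tau>"
    and slope: "dpowr c x = real_of_int A + real p / real q + \<sigma>"
    and small: "0 \<le> \<tau>" "0 \<le> \<sigma>"
      "\<tau> + \<sigma> * real k + c * (c - 1) * x powr (c - 2) * real k ^ 2 < 1 / (2 * real q)"
    and i: "i \<le> k"
  shows "\<lfloor>(x + real i) powr c\<rfloor> = Y + A * int i + int ((p * i + r) div q)"
proof -
  define R where "R = (x + real i) powr c - x powr c - dpowr c x * real i"
  have R: "0 \<le> R" "R \<le> c * (c - 1) * x powr (c - 2) * real i ^ 2"
    using powr_linear_approx[OF c x, of "real i"] unfolding R_def by auto
  have "c * (c - 1) * x powr (c - 2) * real i ^ 2 \<le> c * (c - 1) * x powr (c - 2) * real k ^ 2"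
    using c i by (intro mult_left_mono power_mono) auto
  moreover have "\<sigma> * real i \<le> \<sigma> * real k" using small(2) i by (simp add: mult_left_mono)
  ultimately have E: "0 \<le> \<tau> + \<sigma> * real i + R" "\<tau> + \<sigma> * real i + R < 1 / (2 * real q)"
    using R small by auto
  have "(x + real i) powr c
      = (real (p * i + r) + 1 / 2) / real q + (\<tau> + \<sigma> * real i + R) + real_of_int (Y + A * int i)"
    using q unfolding R_def base slope by (simp add: field_simps)
  then have "\<lfloor>(x + real i) powr c\<rfloor>
      = \<lfloor>(real (p * i + r) + 1 / 2) / real q + (\<tau> + \<sigma> * real i + R)\<rfloor> + (Y + A * int i)"
    by (simp only: floor_add_int)
  then show ?thesis using floor_div_offset[OF q E, of "p * i + r"] by simp
qed

lemma exists_progression_near_level: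
  fixes c \<beta> \<delta> \<epsilon> :: real and m q L :: nat
  assumes c: "1 < c" "c < 2" and m: "0 < m" and \<beta>: "0 < \<beta>" and \<delta>: "0 < \<delta>" and \<epsilon>: "0 < \<epsilon>"
  obtains a J where
    "\<And>l. l \<le> L \<Longrightarrow> 0 < a + q * l"
    "\<And>l. l \<le> L \<Longrightarrow> real (m * J) + \<beta> \<le> dpowr c (a + q * l)"
    "\<And>l. l \<le> L \<Longrightarrow> dpowr c (a + q * l) \<le> real (m * J) + \<beta> + \<delta>"
    "\<And>l. l \<le> L \<Longrightarrow> c * (c - 1) * real (a + q * l) powr (c - 2) \<le> \<epsilon>"
proof -
  define H where "H = real (q * L) + 1"
  have "0 < H" by (simp add: H_def add_nonneg_pos)
  then have "0 < min \<epsilon> (\<delta> / H)" using \<epsilon> \<delta> by simp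
  show thesis
  proof (rule exists_dpowr_level[OF c m \<beta> \<open>0 < min \<epsilon> (\<delta> / H)\<close>])
    fix x J assume x: "0 < x" and level: "dpowr c x = real (m * J) + \<beta>"
      and curv: "c * (c - 1) * x powr (c - 2) \<le> min \<epsilon> (\<delta> / H)"
    have win: "x \<le> real (nat \<lceil>x\<rceil> + q * l)" "real (nat \<lceil>x\<rceil> + q * l) \<le> x + H" if "l \<le> L" for l
    proof -
      have "real (q * l) \<le> real (q * L)" using that by (intro of_nat_mono mult_le_mono2)
      moreover have "x \<le> real (nat \<lceil>x\<rceil>)" "real (nat \<lceil>x\<rceil>) \<le> x + 1" using x by linarith+
      ultimately show "x \<le> real (nat \<lceil>x\<rceil> + q * l)" "real (nat \<lceil>x\<rceil> + q * l) \<le> x + H"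
        unfolding H_def of_nat_add by linarith+
    qed
    have "c * (c - 1) * x powr (c - 2) * H \<le> \<delta>"
      using curv \<open>0 < H\<close> by (simp add: le_divide_eq)
    then show thesis
      using dpowr_window[OF c x win] x curv level by (intro that[of "nat \<lceil>x\<rceil>" J]) force+
  qed
qed

lemma powr_increment_bounds:
  assumes c: "1 < c" "c < 2" and x: "0 < x" and h: "0 \<le> h"
    and slope: "T \<le> dpowr c x" "dpowr c x \<le> T'"
    and curv: "c * (c - 1) * x powr (c - 2) * h ^ 2 \<le> \<eta>"
  shows "T * h \<le> (x + h) powr c - x powr c" "(x + h) powr c - x powr c \<le> T' * h + \<eta>"
proof -
  have "T * h \<le> dpowr c x * h" "dpowr c x * h \<le> T' * h"
    using slope h by (simp_all add: mult_right_mono)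
  then show "T * h \<le> (x + h) powr c - x powr c" "(x + h) powr c - x powr c \<le> T' * h + \<eta>"
    using powr_linear_approx[OF c x h] curv by simp_all
qed

lemma exists_powr_phase:
  fixes c \<delta> \<epsilon> t :: real and m p q :: nat
  assumes c: "1 < c" "c < 2" and m: "0 < m" and q: "0 < q" and \<delta>: "0 < \<delta>" and \<epsilon>: "0 < \<epsilon>"
    and t: "0 \<le> t" "t < 1"
  obtains n Y J where "0 < n"
    "0 \<le> real n powr c - (real_of_int Y + t)"
    "real n powr c - (real_of_int Y + t) < 2 * \<delta> * real q + \<epsilon> * real q ^ 2"
    "real (m * J) + real p / real q + \<delta> \<le> dpowr c (real n)"
    "dpowr c (real n) \<le> real (m * J) + real p / real q + 2 * \<delta>"
    "c * (c - 1) * real n powr (c - 2) \<le> \<epsilon>"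
proof -
  define L where "L = nat \<lceil>2 / \<delta>\<rceil>"
  have "2 / \<delta> \<le> real L" unfolding L_def by linarith
  then have long: "2 \<le> \<delta> * real L" using \<delta> by (simp add: field_simps)
  have \<beta>: "0 < real p / real q + \<delta>" using \<delta> by (simp add: add_nonneg_pos)
  show thesis
  proof (rule exists_progression_near_level[OF c m \<beta> \<delta> \<epsilon>, where L = "Suc L" and q = q])
    fix a J
    assume a_pos: "\<And>l. l \<le> Suc L \<Longrightarrow> 0 < a + q * l"
      and lower: "\<And>l. l \<le> Suc L \<Longrightarrow> real (m * J) + (real p / real q + \<delta>) \<le> dpowr c (a + q * l)"
      and upper: "\<And>l. l \<le> Suc L \<Longrightarrow> dpowr c (a + q * l) \<le> real (m * J) + (real p / real q + \<delta>) + \<delta>"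
      and curv: "\<And>l. l \<le> Suc L \<Longrightarrow> c * (c - 1) * real (a + q * l) powr (c - 2) \<le> \<epsilon>"
    \<comment> \<open>Along \<open>a + q l\<close> the slope of \<open>x powr c\<close> stays in \<open>[s / q + \<delta>, s / q + 2 \<delta>]\<close>, so each
      step of \<open>g\<close> lies between \<open>\<delta>\<close> and \<open>2 \<delta> q + \<epsilon> q\<^sup>2\<close>.\<close>
    define s where "s = real (m * J * q + p)"
    have s: "s = (real (m * J) + real p / real q) * real q" using q by (simp add: s_def field_simps)
    define g where "g l = real (a + q * l) powr c - s * real l" for l
    have "\<delta> \<le> g (Suc l) - g l \<and> g (Suc l) - g l \<le> 2 * \<delta> * real q + \<epsilon> * real q ^ 2"
      if "l < L" for l
    proof -
      have l: "l \<le> Suc L" using that by simp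
      define x where "x = real (a + q * l)"
      have "0 < x" unfolding x_def of_nat_0_less_iff by (rule a_pos[OF l])
      moreover have "c * (c - 1) * x powr (c - 2) * real q ^ 2 \<le> \<epsilon> * real q ^ 2"
        using curv[OF l] by (simp add: x_def mult_right_mono)
      ultimately have "(real (m * J) + (real p / real q + \<delta>)) * real q \<le> (x + real q) powr c - x powr c"
        "(x + real q) powr c - x powr c \<le> (real (m * J) + (real p / real q + \<delta>) + \<delta>) * real q + \<epsilon> * real q ^ 2"
        using powr_increment_bounds[OF c _ _ lower[OF l] upper[OF l]] by (simp_all add: x_def)
      moreover have "g (Suc l) - g l = (x + real q) powr c - x powr c - s"
        by (simp add: g_def x_def algebra_simps)
      moreover have "\<delta> \<le> \<delta> * real q" using q \<delta> by simp
      ultimately show ?thesis using s by (simp add: algebra_simps)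
    qed
    then obtain l Y where l: "l \<le> L" "0 \<le> g l - (real_of_int Y + t)"
      "g l - (real_of_int Y + t) < 2 * \<delta> * real q + \<epsilon> * real q ^ 2"
      using exists_phase[where g = g and L = L] long t by blast
    have "real (a + q * l) powr c - (real_of_int (Y + int (m * J * q + p) * int l) + t)
        = g l - (real_of_int Y + t)"
      by (simp add: g_def s_def)
    then show thesis
      using a_pos[of l] lower[of l] upper[of l] curv[of l] l
      by (intro that[of "a + q * l" "Y + int (m * J * q + p) * int l" J]) auto
  qed
qed

lemma exists_powr_start:
  fixes c :: real and m k p q r :: nat
  assumes c: "1 < c" "c < 2" and m: "0 < m" and q: "0 < q" "q \<le> k" and r: "r < q"
  obtains n Y \<tau> J \<sigma> where "0 < n"
    "real n powr c = real_of_int Y + (real r + 1 / 2) / real q + \<tau>"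
    "dpowr c (real n) = real_of_int (int (m * J)) + real p / real q + \<sigma>"
    "0 \<le> \<tau>" "0 \<le> \<sigma>" "\<tau> + \<sigma> * real k + c * (c - 1) * real n powr (c - 2) * real k ^ 2 < 1 / (2 * real q)"
proof -
  have k: "0 < real k" "real q \<le> real k" using q by auto
  define t where "t = (real r + 1 / 2) / real q"
  have t: "0 \<le> t" "t < 1" using r q by (simp_all add: t_def field_simps)
  define \<delta> where "\<delta> = 1 / (16 * real k ^ 2)"
  define \<epsilon> where "\<epsilon> = 1 / (8 * real k ^ 3)"
  have pos: "0 < \<delta>" "0 < \<epsilon>" using k by (simp_all add: \<delta>_def \<epsilon>_def)
  obtain n Y J where n: "0 < n"
    and phase: "0 \<le> real n powr c - (real_of_int Y + t)"
      "real n powr c - (real_of_int Y + t) < 2 * \<delta> * real q + \<epsilon> * real q ^ 2"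
    and slope: "real (m * J) + real p / real q + \<delta> \<le> dpowr c (real n)"
      "dpowr c (real n) \<le> real (m * J) + real p / real q + 2 * \<delta>"
    and curv: "c * (c - 1) * real n powr (c - 2) \<le> \<epsilon>"
    by (rule exists_powr_phase[OF c m q(1) pos t, where p = p])
  \<comment> \<open>The choice of \<open>\<delta>\<close> and \<open>\<epsilon>\<close> bounds the three error terms by \<open>1 / (4 k)\<close>, \<open>1 / (8 k)\<close>
    and \<open>1 / (8 k)\<close>.\<close>
  define \<tau> where "\<tau> = real n powr c - (real_of_int Y + t)"
  define \<sigma> where "\<sigma> = dpowr c (real n) - (real (m * J) + real p / real q)"
  have "2 * \<delta> * real q \<le> 2 * \<delta> * real k" "\<epsilon> * real q ^ 2 \<le> \<epsilon> * real k ^ 2"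
    using k pos by (simp_all add: mult_left_mono power_mono)
  moreover have "2 * \<delta> * real k = 1 / (8 * real k)" "\<epsilon> * real k ^ 2 = 1 / (8 * real k)"
    using k by (simp_all add: \<delta>_def \<epsilon>_def field_simps power2_eq_square power3_eq_cube)
  moreover have "\<sigma> * real k \<le> 1 / (8 * real k)"
    using slope(2) k by (simp add: \<sigma>_def \<delta>_def field_simps power2_eq_square)
  moreover have "c * (c - 1) * real n powr (c - 2) * real k ^ 2 \<le> 1 / (8 * real k)"
    using curv k by (simp add: \<epsilon>_def field_simps power2_eq_square power3_eq_cube)
  moreover have "1 / (2 * real k) \<le> 1 / (2 * real q)" using k q by (simp add: frac_le)
  ultimately have small: "\<tau> + \<sigma> * real k + c * (c - 1) * real n powr (c - 2) * real k ^ 2 < 1 / (2 * real q)"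
    using phase(2) unfolding \<tau>_def by linarith
  have "real n powr c = real_of_int Y + (real r + 1 / 2) / real q + \<tau>"
    "dpowr c (real n) = real_of_int (int (m * J)) + real p / real q + \<sigma>"
    "0 \<le> \<tau>" "0 \<le> \<sigma>"
    using phase(1) slope(1) pos(1) by (simp_all add: \<tau>_def \<sigma>_def t_def)
  from n this small show thesis by (rule that)
qed

lemma floor_powr_realizes_staircase:
  fixes c :: real and m k p q r :: nat
  assumes c: "1 < c" "c < 2" and m: "0 < m" and q: "0 < q" "q \<le> k" and r: "r < q"
  obtains n where "\<And>i. i < k \<Longrightarrow>
    \<lfloor>real (n + i) powr c\<rfloor> mod int m = (\<lfloor>real n powr c\<rfloor> + int ((p * i + r) div q)) mod int m"
proof (rule exists_powr_start[OF c m q r, where p = p])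
  fix n Y \<tau> J \<sigma>
  assume n: "0 < n" and base: "real n powr c = real_of_int Y + (real r + 1 / 2) / real q + \<tau>"
    and slope: "dpowr c (real n) = real_of_int (int (m * J)) + real p / real q + \<sigma>"
    and small: "0 \<le> \<tau>" "0 \<le> \<sigma>"
      "\<tau> + \<sigma> * real k + c * (c - 1) * real n powr (c - 2) * real k ^ 2 < 1 / (2 * real q)"
  have floor: "\<lfloor>(real n + real i) powr c\<rfloor> = Y + int (m * J) * int i + int ((p * i + r) div q)"
    if "i \<le> k" for i
    using floor_powr_window[OF c _ q(1) base slope small that] n by simp
  show thesis
  proof (rule that)
    fix i assume "i < k"
    have "\<lfloor>real (n + i) powr c\<rfloor> = (\<lfloor>real n powr c\<rfloor> + int ((p * i + r) div q)) + int m * (int J * int i)"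
      using floor[of i] floor[of 0] \<open>i < k\<close> r by (simp add: ac_simps)
    then show "\<lfloor>real (n + i) powr c\<rfloor> mod int m = (\<lfloor>real n powr c\<rfloor> + int ((p * i + r) div q)) mod int m"
      by simp
  qed
qed

lemma sum_lessThan_add_nat:
  fixes f :: "nat \<Rightarrow> 'a::comm_monoid_add"
  shows "(\<Sum>i<a + b. f i) = (\<Sum>i<a. f i) + (\<Sum>i<b. f (a + i))"
  by (induction b) (simp_all add: add.assoc)

lemma staircase_eq_imp_slope_eq:
  fixes p q p' q' r r' k :: nat
  assumes q: "0 < q" "0 < q'" and k: "q + q' \<le> k"
    and eq: "\<And>i. i < k \<Longrightarrow> (p * i + r) div q = (p' * i + r') div q'"
  shows "q' * p = q * p'"
proof -
  \<comment> \<open>Sum \<open>F\<close> over \<open>[0, q + q')\<close>, splitting once at \<open>q\<close> and once at \<open>q'\<close>.\<close>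
  define F where "F i = (p' * i + r') div q'" for i
  have shift_q: "F (q + i) = F i + p" if "i < q'" for i
  proof -
    have split: "p * (q + i) + r = (p * i + r) + q * p" by (simp add: algebra_simps)
    have "((p * i + r) + q * p) div q = (p * i + r) div q + p" using q by simp
    then have "(p * (q + i) + r) div q = (p * i + r) div q + p" unfolding split .
    then show ?thesis using eq[of "q + i"] eq[of i] that k by (simp add: F_def)
  qed
  have shift_q': "F (q' + i) = F i + p'" for i
  proof -
    have split: "p' * (q' + i) + r' = (p' * i + r') + q' * p'" by (simp add: algebra_simps)
    have "((p' * i + r') + q' * p') div q' = (p' * i + r') div q' + p'" using q by simp
    then show ?thesis unfolding F_def split .
  qed
  have "(\<Sum>i<q + q'. F i) = (\<Sum>i<q. F i) + (\<Sum>i<q'. F i) + q' * p"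
    using shift_q by (simp add: sum_lessThan_add_nat sum.distrib)
  moreover have "(\<Sum>i<q' + q. F i) = (\<Sum>i<q'. F i) + (\<Sum>i<q. F i) + q * p'"
    using shift_q' by (simp add: sum_lessThan_add_nat sum.distrib)
  ultimately show ?thesis by (simp add: add.commute)
qed

lemma staircase_offset_inj:
  fixes p q s s' k :: nat
  assumes cop: "coprime p q" and s: "s < s'" "s' < q" and k: "q \<le> k"
  shows "\<exists>i<k. (p * i + s) div q \<noteq> (p * i + s') div q"
proof -
  \<comment> \<open>The two staircases differ at the \<open>i < q\<close> with \<open>p i + s' \<equiv> 0 (mod q)\<close>.\<close>
  obtain x where x: "[p * x = 1] (mod q)" using cong_solve_coprime_nat[OF cop] by auto
  define i where "i = (x * (q - s')) mod q"
  have "[p * i = p * (x * (q - s'))] (mod q)"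
    unfolding i_def by (intro cong_mult cong_refl) (simp add: cong_def)
  also have "[p * (x * (q - s')) = 1 * (q - s')] (mod q)"
    unfolding mult.assoc[symmetric] by (intro cong_mult x cong_refl)
  finally have "[p * i + s' = (q - s') + s'] (mod q)" by (simp add: cong_add_rcancel_nat)
  then have "q dvd p * i + s'" using s by (simp add: cong_def dvd_eq_mod_eq_0)
  then obtain t where t: "p * i + s' = q * t" by blast
  have "0 < t" using t s by (cases t) auto
  define u where "u = q - (s' - s)"
  have "p * i + s = q * (t - 1) + u" using t s \<open>0 < t\<close>
    by (simp add: u_def algebra_simps diff_mult_distrib2)
  moreover have "u < q" using s by (simp add: u_def)
  ultimately have "(p * i + s) div q = t - 1" by simp
  moreover have "(p * i + s') div q = t" using t s by simp
  moreover have "i < q" using s unfolding i_def by simp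
  then have "i < k" using k by simp
  ultimately show ?thesis using \<open>0 < t\<close> by (intro exI[of _ i]) auto
qed

lemma staircase_inj:
  fixes p q p' q' r r' k :: nat
  assumes q: "0 < q" "0 < q'" and k: "q + q' \<le> k"
    and cop: "coprime p q" "coprime p' q'" and r: "r < q" "r' < q'"
    and eq: "\<And>i. i < k \<Longrightarrow> (p * i + r) div q = (p' * i + r') div q'"
  shows "p = p' \<and> q = q' \<and> r = r'"
proof -
  have slope: "q' * p = q * p'" by (rule staircase_eq_imp_slope_eq[OF q k eq])
  then have "q dvd q' * p" "q' dvd q * p'" by (metis dvd_triv_left dvd_triv_right)+
  then have "q dvd q'" "q' dvd q" using cop by (simp_all add: coprime_commute coprime_dvd_mult_left_iff)
  then have qq: "q = q'" by (rule dvd_antisym)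
  then have pp: "p = p'" using slope q by simp
  have same: "(p * i + r) div q = (p * i + r') div q" if "i < k" for i
    using eq[OF that] pp qq by simp
  have "q \<le> k" using k by simp
  then have "\<not> r < r'" "\<not> r' < r"
    using staircase_offset_inj[OF cop(1), of r r' k] staircase_offset_inj[OF cop(1), of r' r k] same r qq
    by fastforce+
  then have "r = r'" by simp
  with pp qq show ?thesis by simp
qed

lemma eq_if_mod_eq_unit_steps:
  fixes D D' :: "nat \<Rightarrow> int"
  assumes m: "2 \<le> m" and start: "D 0 = D' 0"
    and steps: "\<And>i. D (Suc i) - D i \<in> {0, 1}" "\<And>i. D' (Suc i) - D' i \<in> {0, 1}"
    and mod_eq: "\<And>i. i < k \<Longrightarrow> D i mod int m = D' i mod int m"
  shows "i < k \<Longrightarrow> D i = D' i"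
proof (induction i)
  case (Suc i)
  then have "D i = D' i" by simp
  then have "\<bar>D (Suc i) - D' (Suc i)\<bar> < int m" using steps[of i] m by auto
  moreover obtain y where "D (Suc i) - D' (Suc i) = int m * y"
    using mod_eq[OF Suc.prems] by (auto simp: mod_eq_dvd_iff)
  ultimately have "int m * \<bar>y\<bar> < int m * 1" by (simp add: abs_mult)
  then have "\<bar>y\<bar> < 1" using m by (subst (asm) mult_less_cancel_left_pos) auto
  then have "y = 0" by simp
  then show ?case using \<open>D (Suc i) - D' (Suc i) = int m * y\<close> by simp
qed (use start in simp)

lemma staircase_unit_step:
  fixes p q r :: nat
  assumes "p \<le> q"
  shows "int ((p * Suc i + r) div q) - int ((p * i + r) div q) \<in> {0, 1}"
proof -
  have lower: "(p * i + r) div q \<le> (p * Suc i + r) div q" by (intro div_le_mono) simp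
  have "(p * Suc i + r) div q \<le> (p * i + r + q) div q" using assms by (intro div_le_mono) simp
  also have "\<dots> \<le> (p * i + r) div q + 1" by (cases "q = 0") simp_all
  finally show ?thesis using lower by auto
qed

section \<open>Counting coprime triples\<close>

definition triples :: "nat \<Rightarrow> (nat \<times> nat \<times> nat) set" where
  "triples K = {(p, q, r). 1 \<le> p \<and> p < q \<and> q \<le> K \<and> r < q}"

definition coprime_triples :: "nat \<Rightarrow> (nat \<times> nat \<times> nat) set" where
  "coprime_triples K = {(p, q, r) \<in> triples K. coprime p q}"

lemma sum_pronic: "real (\<Sum>q = 1..K. (q - 1) * q) = (real K ^ 3 - real K) / 3"
proof -
  have "3 * (\<Sum>q = 1..K. (q - 1) * q) = (K - 1) * K * (K + 1)"
  proof (induction K)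
    case (Suc K)
    have "3 * (\<Sum>q = 1..Suc K. (q - 1) * q) = (K - 1) * K * (K + 1) + 3 * (K * Suc K)"
      using Suc by (simp add: sum.atLeast1_atMost_eq algebra_simps)
    also have "\<dots> = K * (K + 1) * (K + 2)" by (cases K) (simp_all add: algebra_simps)
    finally show ?case by simp
  qed simp
  then have "real (3 * (\<Sum>q = 1..K. (q - 1) * q)) = real ((K - 1) * K * (K + 1))"
    by (simp only:)
  then have "3 * real (\<Sum>q = 1..K. (q - 1) * q) = real ((K - 1) * K * (K + 1))"
    by simp
  also have "\<dots> = real K ^ 3 - real K"
    by (cases K) (simp_all add: algebra_simps power3_eq_cube)
  finally show ?thesis by simp
qed

lemma card_triples: "card (triples K) = (\<Sum>q = 1..K. (q - 1) * q)"
proof -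
  have "triples K = (\<lambda>(q, p, r). (p, q, r)) ` (SIGMA q:{1..K}. {1..<q} \<times> {..<q})"
    unfolding triples_def by (auto simp: image_iff)
  moreover have "inj_on (\<lambda>(q, p, r). (p, q, r)) (SIGMA q:{1..K}. {1..<q} \<times> {..<q})"
    by (auto simp: inj_on_def)
  ultimately have "card (triples K) = card (SIGMA q:{1..K}. {1..<q} \<times> {..<q})"
    by (simp add: card_image)
  also have "\<dots> = (\<Sum>q = 1..K. (q - 1) * q)" by (simp add: card_SigmaI card_cartesian_product)
  finally show ?thesis .
qed

lemma card_triples_dvd_le:
  assumes "1 \<le> d"
  shows "real (card {(p, q, r) \<in> triples K. d dvd p \<and> d dvd q}) \<le> real K ^ 3 / (3 * real d ^ 2)"
proof -
  define S where "S = K div d"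
  have "{(p, q, r) \<in> triples K. d dvd p \<and> d dvd q}
      \<subseteq> (\<lambda>(s, t, r). (d * t, d * s, r)) ` (SIGMA s:{1..S}. {1..<s} \<times> {..<d * s})"
  proof
    fix x assume x: "x \<in> {(p, q, r) \<in> triples K. d dvd p \<and> d dvd q}"
    obtain p q r where pqr: "x = (p, q, r)" by (cases x)
    have "1 \<le> p" "p < q" "q \<le> K" "r < q" "d dvd p" "d dvd q"
      using x by (auto simp: pqr triples_def)
    moreover from this obtain t s where "p = d * t" "q = d * s" by (auto elim!: dvdE)
    moreover have "s \<le> S" using \<open>q = d * s\<close> \<open>q \<le> K\<close> assms
      by (simp add: S_def less_eq_div_iff_mult_less_eq mult.commute)
    ultimately show "x \<in> (\<lambda>(s, t, r). (d * t, d * s, r)) ` (SIGMA s:{1..S}. {1..<s} \<times> {..<d * s})"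
      by (auto simp: pqr image_iff intro!: bexI[of _ "(s, t, r)"])
  qed
  then have "card {(p, q, r) \<in> triples K. d dvd p \<and> d dvd q}
      \<le> card ((\<lambda>(s, t, r). (d * t, d * s, r)) ` (SIGMA s:{1..S}. {1..<s} \<times> {..<d * s}))"
    by (rule card_mono[rotated]) auto
  also have "\<dots> \<le> card (SIGMA s:{1..S}. {1..<s} \<times> {..<d * s})" by (rule card_image_le) auto
  also have "\<dots> = d * (\<Sum>s = 1..S. (s - 1) * s)"
    by (simp add: card_SigmaI card_cartesian_product sum_distrib_left algebra_simps)
  finally have "real (card {(p, q, r) \<in> triples K. d dvd p \<and> d dvd q})
      \<le> real (d * (\<Sum>s = 1..S. (s - 1) * s))"
    by (simp only: of_nat_le_iff)
  also have "\<dots> = real d * ((real S ^ 3 - real S) / 3)" by (simp only: of_nat_mult sum_pronic)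
  also have "\<dots> \<le> real d * real S ^ 3 / 3" by (simp add: mult_left_mono)
  also have "\<dots> \<le> real K ^ 3 / (3 * real d ^ 2)"
  proof -
    have "d * S \<le> K" unfolding S_def by (simp add: mult.commute)
    then have "real d * real S \<le> real K" by (simp only: of_nat_le_iff of_nat_mult[symmetric])
    then have "(real d * real S) ^ 3 \<le> real K ^ 3" by (intro power_mono) auto
    then show ?thesis using assms by (simp add: field_simps power_mult_distrib power2_eq_square power3_eq_cube)
  qed
  finally show ?thesis .
qed

lemma sum_inverse_squares_le: "(\<Sum>d = 2..n. 1 / real d ^ 2) \<le> 3 / 4"
proof -
  have bound: "(\<Sum>d = 2..n. 1 / real d ^ 2) \<le> 3 / 4 - 1 / real n" if "2 \<le> n" for n
    using that
  proof (induction n rule: dec_induct)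
    case (step n)
    have "1 / real (Suc n) ^ 2 \<le> 1 / (real n * real (Suc n))"
      using step by (intro divide_left_mono) (auto simp: power2_eq_square)
    also have "\<dots> = 1 / real n - 1 / real (Suc n)" using step by (simp add: field_simps)
    finally show ?case using step by (simp add: sum.atLeast_Suc_atMost_Suc_shift)
  qed simp
  show ?thesis
  proof (cases "2 \<le> n")
    case True
    then show ?thesis using bound[OF True] by (smt (verit) divide_nonneg_nonneg of_nat_0_le_iff)
  qed simp
qed

lemma triples_diff_coprime_subset:
  "triples K - coprime_triples K \<subseteq> (\<Union>d\<in>{2..K}. {(p, q, r) \<in> triples K. d dvd p \<and> d dvd q})"
proof
  fix x assume x: "x \<in> triples K - coprime_triples K"
  obtain p q r where pqr: "x = (p, q, r)" by (cases x)
  have "1 \<le> p" "p < q" "q \<le> K" "\<not> coprime p q"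
    using x by (auto simp: pqr triples_def coprime_triples_def)
  then have "gcd p q \<le> q" "gcd p q \<noteq> 0" "gcd p q \<noteq> 1"
    by (simp_all add: gcd_le2_nat coprime_iff_gcd_eq_1)
  then have "gcd p q \<in> {2..K}" using \<open>q \<le> K\<close> unfolding atLeastAtMost_iff by arith
  then show "x \<in> (\<Union>d\<in>{2..K}. {(p, q, r) \<in> triples K. d dvd p \<and> d dvd q})"
    using x by (auto simp: pqr)
qed

lemma card_coprime_triples_ge: "real K ^ 3 / 12 - real K / 3 \<le> real (card (coprime_triples K))"
proof -
  have fin: "finite (triples K)"
    by (rule finite_subset[of _ "{..K} \<times> {..K} \<times> {..K}"]) (auto simp: triples_def)
  have sub: "coprime_triples K \<subseteq> triples K" by (auto simp: coprime_triples_def)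
  have fin_dvd: "finite {(p, q, r) \<in> triples K. d dvd p \<and> d dvd q}" for d
    using fin by (rule finite_subset[rotated]) auto
  have "card (triples K) = card (coprime_triples K) + card (triples K - coprime_triples K)"
    using card_Diff_subset[OF finite_subset[OF sub fin] sub] card_mono[OF fin sub] by simp
  also have "card (triples K - coprime_triples K)
      \<le> card (\<Union>d\<in>{2..K}. {(p, q, r) \<in> triples K. d dvd p \<and> d dvd q})"
    using fin_dvd by (intro card_mono triples_diff_coprime_subset) auto
  also have "\<dots> \<le> (\<Sum>d = 2..K. card {(p, q, r) \<in> triples K. d dvd p \<and> d dvd q})"
    by (rule card_UN_le) simp
  finally have "real (card (triples K))
      \<le> real (card (coprime_triples K)) + (\<Sum>d = 2..K. real (card {(p, q, r) \<in> triples K. d dvd p \<and> d dvd q}))"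
    by (simp flip: of_nat_sum of_nat_add)
  also have "(\<Sum>d = 2..K. real (card {(p, q, r) \<in> triples K. d dvd p \<and> d dvd q}))
      \<le> (\<Sum>d = 2..K. real K ^ 3 / 3 * (1 / real d ^ 2))"
    by (intro sum_mono) (simp add: card_triples_dvd_le)
  also have "\<dots> = real K ^ 3 / 3 * (\<Sum>d = 2..K. 1 / real d ^ 2)" by (simp add: sum_distrib_left)
  also have "\<dots> \<le> real K ^ 3 / 3 * (3 / 4)" by (intro mult_left_mono sum_inverse_squares_le) auto
  also have "\<dots> = real K ^ 3 / 4" by simp
  finally have "real (card (triples K)) \<le> real (card (coprime_triples K)) + real K ^ 3 / 4"
    by simp
  moreover have "real (card (triples K)) = (real K ^ 3 - real K) / 3"
    by (simp only: card_triples sum_pronic)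
  ultimately show ?thesis by (simp add: field_simps)
qed

section \<open>The lower bound\<close>

definition staircase :: "nat \<times> nat \<times> nat \<Rightarrow> nat \<Rightarrow> nat" where
  "staircase = (\<lambda>(p, q, r) i. (p * i + r) div q)"

lemma staircase_mod_inj:
  assumes m: "2 \<le> m" and k: "2 * K < k" and t: "t \<in> coprime_triples K" "t' \<in> coprime_triples K"
    and eq: "\<And>i. i < k \<Longrightarrow> (F + int (staircase t i)) mod int m = (F' + int (staircase t' i)) mod int m"
  shows "t = t'"
proof -
  obtain p q r p' q' r' where tt: "t = (p, q, r)" "t' = (p', q', r')" by (cases t, cases t')
  have pqr: "1 \<le> p" "p < q" "q \<le> K" "r < q" "coprime p q"
    and pqr': "1 \<le> p'" "p' < q'" "q' \<le> K" "r' < q'" "coprime p' q'"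
    using t by (auto simp: tt coprime_triples_def triples_def)
  have F: "F mod int m = F' mod int m"
    using eq[of 0] k pqr(4) pqr'(4) by (simp add: tt staircase_def)
  define E where "E i = F mod int m + int ((p * i + r) div q)" for i
  define E' where "E' i = F' mod int m + int ((p' * i + r') div q')" for i
  have "E i = E' i" if "i < k" for i
  proof (rule eq_if_mod_eq_unit_steps[OF m _ _ _ _ that])
    show "E 0 = E' 0" using F pqr(4) pqr'(4) by (simp add: E_def E'_def)
    show "E (Suc i) - E i \<in> {0, 1}" "E' (Suc i) - E' i \<in> {0, 1}" for i
      using staircase_unit_step[of p q i r] staircase_unit_step[of p' q' i r'] pqr pqr'
      by (simp_all add: E_def E'_def)
    show "E i mod int m = E' i mod int m" if "i < k" for i
      using eq[OF that] by (simp add: E_def E'_def tt staircase_def mod_add_left_eq)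
  qed
  then have "(p * i + r) div q = (p' * i + r') div q'" if "i < k" for i
    using that F by (simp add: E_def E'_def)
  then have "p = p' \<and> q = q' \<and> r = r'"
    using pqr pqr' k by (intro staircase_inj) auto
  then show ?thesis by (simp add: tt)
qed

lemma card_coprime_triples_le_subword_complexity:
  fixes c :: real
  assumes c: "1 < c" "c < 2" and m: "2 \<le> m" and k: "2 * K < k"
  shows "card (coprime_triples K) \<le> subword_complexity (\<lambda>n. nat \<lfloor>real n powr c\<rfloor> mod m) k"
proof -
  let ?u = "\<lambda>n. nat \<lfloor>real n powr c\<rfloor> mod m"
  have "\<forall>t \<in> coprime_triples K. \<exists>n. \<forall>i<k.
      \<lfloor>real (n + i) powr c\<rfloor> mod int m = (\<lfloor>real n powr c\<rfloor> + int (staircase t i)) mod int m"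
  proof
    fix t assume t: "t \<in> coprime_triples K"
    obtain p q r where pqr: "t = (p, q, r)" by (cases t)
    have "0 < m" "0 < q" "q \<le> k" "r < q" using t m k by (auto simp: pqr coprime_triples_def triples_def)
    then show "\<exists>n. \<forall>i<k.
        \<lfloor>real (n + i) powr c\<rfloor> mod int m = (\<lfloor>real n powr c\<rfloor> + int (staircase t i)) mod int m"
      by (rule floor_powr_realizes_staircase[OF c, where p = p]) (auto simp: pqr staircase_def)
  qed
  from bchoice[OF this] obtain f where f: "\<forall>t \<in> coprime_triples K. \<forall>i<k.
      \<lfloor>real (f t + i) powr c\<rfloor> mod int m = (\<lfloor>real (f t) powr c\<rfloor> + int (staircase t i)) mod int m"
    by blast
  have int_u: "int (?u n) = \<lfloor>real n powr c\<rfloor> mod int m" for n by (simp add: zmod_int)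
  have "inj_on (\<lambda>t. block ?u k (f t)) (coprime_triples K)"
  proof (rule inj_onI)
    fix t t' assume t: "t \<in> coprime_triples K" "t' \<in> coprime_triples K"
      and blocks: "block ?u k (f t) = block ?u k (f t')"
    show "t = t'"
    proof (rule staircase_mod_inj[OF m k t])
      fix i assume "i < k"
      then have "?u (f t + i) = ?u (f t' + i)" using blocks by (simp add: block_def map_eq_conv)
      then have "\<lfloor>real (f t + i) powr c\<rfloor> mod int m = \<lfloor>real (f t' + i) powr c\<rfloor> mod int m"
        by (simp only: int_u[symmetric])
      then show "(\<lfloor>real (f t) powr c\<rfloor> + int (staircase t i)) mod int m
          = (\<lfloor>real (f t') powr c\<rfloor> + int (staircase t' i)) mod int m"
        using f t \<open>i < k\<close> by simp
    qed
  qed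
  moreover have "?u n < m" for n using m by simp
  ultimately show ?thesis by (intro card_le_subword_complexity)
qed

lemma subword_complexity_floor_powr_lower:
  fixes c :: real
  assumes c: "1 < c" "c < 2" and m: "2 \<le> m"
  shows "\<exists>C>0. \<forall>k::nat. 1 \<le> k \<longrightarrow>
           C * real k ^ 3 \<le> real (subword_complexity (\<lambda>n. nat \<lfloor>real n powr c\<rfloor> mod m) k)"
proof (intro exI conjI allI impI)
  fix k :: nat assume k: "1 \<le> k"
  let ?L = "real (subword_complexity (\<lambda>n. nat \<lfloor>real n powr c\<rfloor> mod m) k)"
  show "1 / 648 * real k ^ 3 \<le> ?L"
  proof (cases "k < 7")
    case True
    then have "real k ^ 3 \<le> 6 ^ 3" by (intro power_mono) auto
    moreover have "0 < subword_complexity (\<lambda>n. nat \<lfloor>real n powr c\<rfloor> mod m) k"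
      using m by (intro subword_complexity_pos[where m = m]) simp
    ultimately show ?thesis by simp
  next
    case False
    define K where "K = (k - 1) div 2"
    have K: "3 \<le> real K" "real k \<le> 3 * real K" "2 * K < k" using False by (auto simp: K_def)
    have "3 ^ 2 \<le> real K ^ 2" using K(1) by (intro power_mono) auto
    then have "real K * 8 \<le> real K * real K ^ 2" using K(1) by (intro mult_left_mono) auto
    then have "real K ^ 3 / 24 \<le> real K ^ 3 / 12 - real K / 3"
      by (simp add: power2_eq_square power3_eq_cube)
    also have "\<dots> \<le> real (card (coprime_triples K))" by (rule card_coprime_triples_ge)
    also have "\<dots> \<le> ?L" using card_coprime_triples_le_subword_complexity[OF c m K(3)] by simp
    finally have "real K ^ 3 / 24 \<le> ?L" .
    moreover have "real k ^ 3 \<le> (3 * real K) ^ 3" using K(2) by (intro power_mono) auto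
    ultimately show ?thesis by (simp add: power_mult_distrib)
  qed
qed simp

theorem theorem3:
  fixes c :: real and m :: nat
  assumes "1 < c" "c < 2" "m \<ge> 2"
  defines "u \<equiv> (\<lambda>n::nat. nat \<lfloor>(real n) powr c\<rfloor> mod m)"
  shows "(\<forall>r::real. r > max (4 / (2 - c)) 6 \<longrightarrow>
            (\<exists>C1::real. \<forall>k::nat. k \<ge> 1 \<longrightarrow> real (subword_complexity u k) \<le> C1 * (real k) powr r))
       \<and> (\<exists>C2::real. C2 > 0 \<and> (\<forall>k::nat. k \<ge> 1 \<longrightarrow> real (subword_complexity u k) \<ge> C2 * (real k) ^ 3))"
proof (intro conjI allI impI)
  fix r :: real assume r: "r > max (4 / (2 - c)) 6"
  have "3 / (2 - c) \<le> 4 / (2 - c)" using assms(2) by (simp add: divide_right_mono)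
  then show "\<exists>C1. \<forall>k. 1 \<le> k \<longrightarrow> real (subword_complexity u k) \<le> C1 * real k powr r"
    using subword_complexity_floor_powr_upper[OF assms(1,2), of m r] r assms(3) by (simp add: u_def)
next
  show "\<exists>C2>0. \<forall>k. 1 \<le> k \<longrightarrow> C2 * real k ^ 3 \<le> real (subword_complexity u k)"
    using subword_complexity_floor_powr_lower[OF assms(1-3)] by (simp add: u_def)
qed

end
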